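(* Let $\lambda\in\mathbb{R}$ be fixed, $p=(1+\lambda n^{-1/3})/n$, and $A=A(n)=o(n^{2/3})$. Let $T=\lceil n^{2/3}/A\rceil$, $L=\lfloor n/(2T)\rfloor$, and for $B>0$ let $\mathcal{G}_{2L-1}(B)=\{t_{2L-1}\le BLT^{1/2}\}$, where $(t_i)$ are the excursion end times of the exploration process of $\mathbb{G}(n,p)$ described in the context. There exist constants $B_0>0$ and $A_0=A_0(\lambda)>0$ such that for any $A\ge A_0$, $B\ge B_0$ and all sufficiently large $n$, \[\mathbb{P}(\mathcal{G}_{2L-1}(B)^c)\le\exp(-cA^{3/2})\] for some constant $c=c(B)>0$.
   Context: $\mathbb{G}(n,p)$ is the Erdős–Rényi random graph on $[n]$ (each edge present independently with probability $p$). Exploration process: fix an ordering of $[n]$ with some vertex $v$ first. Sets of active, unseen and explored vertices $\mathcal{A}_t,\mathcal{U}_t,\mathcal{E}_t$ partition $[n]$; initially $\mathcal{A}_0=\{v\}$, $\mathcal{U}_0=[n]\setminus\{v\}$, $\mathcal{E}_0=\emptyset$. At step $t\ge1$: if $\mathcal{A}_{t-1}\ne\emptyset$ let $u_t$ be the first active vertex; if $\mathcal{A}_{t-1}=\emptyset$ and $\mathcal{U}_{t-1}\ne\emptyset$ let $u_t$ be the first unseen vertex; otherwise stop. Let $\mathcal{D}_t=\{x\in\mathcal{U}_{t-1}\setminus\{u_t\}:x\sim u_t\}$ and update $\mathcal{U}_t=\mathcal{U}_{t-1}\setminus(\mathcal{D}_t\cup\{u_t\})$, $\mathcal{A}_t=(\mathcal{A}_{t-1}\setminus\{u_t\})\cup\mathcal{D}_t$,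 $\mathcal{E}_t=\mathcal{E}_{t-1}\cup\{u_t\}$. The process runs for $n$ steps. Let $Y_t=|\mathcal{A}_t|$, $t_0=0$ and $t_i=\min\{t\ge t_{i-1}+1:Y_t=0\}$ (defined while the procedure runs); $t_i-t_{i-1}$ is the size of the $i$-th explored component. *)

theory Defs
  imports "HOL-Probability.Probability" "HOL-Library.Landau_Symbols" "HOL-Library.Extended_Nat"
begin

text \<open>Vertex set [n] = {1..n}, with the natural order as the fixed ordering (vertex 1 first).
  A graph on [n] is given by a function on unordered pairs {x,y} (x \<noteq> y) telling whether the
  edge is present.\<close>

definition vpairs :: "nat \<Rightarrow> nat set set" where
  "vpairs n = {{x, y} | x y. x \<in> {1..n} \<and> y \<in> {1..n} \<and> x \<noteq> y}"

definition gnp :: "nat \<Rightarrow> real \<Rightarrow> (nat set \<Rightarrow> bool) pmf" where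
  "gnp n p = Pi_pmf (vpairs n) False (\<lambda>_. bernoulli_pmf p)"

definition adj :: "(nat set \<Rightarrow> bool) \<Rightarrow> nat \<Rightarrow> nat \<Rightarrow> bool" where
  "adj g x y \<longleftrightarrow> x \<noteq> y \<and> g {x, y}"

text \<open>Exploration state: (active, unseen, explored).\<close>
type_synonym expl_state = "nat set \<times> nat set \<times> nat set"

definition expl_step :: "(nat set \<Rightarrow> bool) \<Rightarrow> expl_state \<Rightarrow> expl_state" where
  "expl_step g s = (case s of (A, U, E) \<Rightarrow>
     if A = {} \<and> U = {} then (A, U, E)
     else let u = (if A \<noteq> {} then Min A else Min U);
              D = {x \<in> U - {u}. adj g u x}
          in ((A - {u}) \<union> D, U - (D \<union> {u}), E \<union> {u}))"

definition expl_init :: "nat \<Rightarrow> expl_state" where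
  "expl_init n = ({1}, {2..n}, {})"

definition expl_state :: "nat \<Rightarrow> (nat set \<Rightarrow> bool) \<Rightarrow> nat \<Rightarrow> expl_state" where
  "expl_state n g t = (expl_step g ^^ t) (expl_init n)"

definition Yproc :: "nat \<Rightarrow> (nat set \<Rightarrow> bool) \<Rightarrow> nat \<Rightarrow> nat" where
  "Yproc n g t = card (fst (expl_state n g t))"

fun exc_end :: "nat \<Rightarrow> (nat set \<Rightarrow> bool) \<Rightarrow> nat \<Rightarrow> enat" where
  "exc_end n g 0 = 0"
| "exc_end n g (Suc i) =
     (case exc_end n g i of
        \<infinity> \<Rightarrow> \<infinity>
      | enat s \<Rightarrow> (if \<exists>t. s + 1 \<le> t \<and> t \<le> n \<and> Yproc n g t = 0
                  then enat (LEAST t. s + 1 \<le> t \<and> t \<le> n \<and> Yproc n g t = 0)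
                  else \<infinity>))"

definition Tpar :: "nat \<Rightarrow> real \<Rightarrow> nat" where
  "Tpar n A = nat \<lceil>real n powr (2/3) / A\<rceil>"

definition Lpar :: "nat \<Rightarrow> real \<Rightarrow> nat" where
  "Lpar n A = nat \<lfloor>real n / (2 * real (Tpar n A))\<rfloor>"

definition good_event :: "nat \<Rightarrow> real \<Rightarrow> real \<Rightarrow> (nat set \<Rightarrow> bool) set" where
  "good_event n A B = {g. \<exists>k. exc_end n g (2 * Lpar n A - 1) = enat k \<and>
        real k \<le> B * real (Lpar n A) * sqrt (real (Tpar n A))}"

end

theory Submission
  imports Defs
begin

text \<open>
  Let \<open>N\<^sub>m\<close> be the number of vertices discovered during the first \<open>m\<close> steps of the exploration.
  Every step removes one vertex from the active set and adds the newly discovered ones, except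
  that a step starting from an empty active set first activates a fresh vertex; hence
  \<open>m + Y\<^sub>m = 1 + N\<^sub>m + #{1 \<le> t < m. Y\<^sub>t = 0}\<close>, and \<open>t\<^sub>2\<^sub>L\<^sub>-\<^sub>1 \<le> m\<close> as soon as \<open>N\<^sub>m \<le> m - 2L\<close>.
  In step \<open>k\<close> at most \<open>n - k\<close> fresh vertex pairs are examined, each present independently
  with probability \<open>p\<close>, so the moment generating function of \<open>N\<^sub>m\<close> is dominated by that of a
  binomial variable with \<open>\<approx> mn - m\<^sup>2/2\<close> trials.  Taking \<open>m \<approx> B n\<^sup>2\<^sup>/\<^sup>3 A\<^sup>1\<^sup>/\<^sup>2\<close>, the mean
  \<open>m - m\<^sup>2/(2n) + O(\<lambda>m n\<^sup>-\<^sup>1\<^sup>/\<^sup>3)\<close> falls short of \<open>m - 2L\<close> by order \<open>B\<^sup>2 n\<^sup>1\<^sup>/\<^sup>3 A\<close>, because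
  \<open>L \<approx> n\<^sup>1\<^sup>/\<^sup>3 A/2\<close>; a Chernoff bound then gives the tail \<open>exp (- c B\<^sup>3 A\<^sup>3\<^sup>/\<^sup>2)\<close>.
\<close>

section \<open>The exploration process\<close>

definition pairs :: "nat set \<Rightarrow> nat set set" where
  "pairs V = {{x, y} | x y. x \<in> V \<and> y \<in> V \<and> x \<noteq> y}"

definition expl_vertex :: "expl_state \<Rightarrow> nat" where
  "expl_vertex s = (case s of (A, U, E) \<Rightarrow> if A \<noteq> {} then Min A else Min U)"

definition expl_new :: "(nat set \<Rightarrow> bool) \<Rightarrow> expl_state \<Rightarrow> nat set" where
  "expl_new g s = (case s of (A, U, E) \<Rightarrow> if A = {} \<and> U = {} then {}
     else {x \<in> U - {expl_vertex s}. adj g (expl_vertex s) x})"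

fun discovered :: "(nat set \<Rightarrow> bool) \<Rightarrow> expl_state \<Rightarrow> nat \<Rightarrow> nat" where
  "discovered g s 0 = 0"
| "discovered g s (Suc k) = card (expl_new g s) + discovered g (expl_step g s) k"

lemma pairs_mono: "V \<subseteq> W \<Longrightarrow> pairs V \<subseteq> pairs W"
  by (auto simp: pairs_def)

lemma finite_pairs: "finite V \<Longrightarrow> finite (pairs V)"
  by (rule finite_subset[of _ "Pow V"]) (auto simp: pairs_def)

lemma vpairs_eq_pairs: "vpairs n = pairs {1..n}"
  by (simp add: vpairs_def pairs_def)

lemma expl_step_unfold:
  "expl_step g (A, U, E) = (if A = {} \<and> U = {} then (A, U, E) else
     ((A - {expl_vertex (A, U, E)}) \<union> expl_new g (A, U, E),
      U - (expl_new g (A, U, E) \<union> {expl_vertex (A, U, E)}),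
      E \<union> {expl_vertex (A, U, E)}))"
  by (simp add: expl_step_def expl_vertex_def expl_new_def Let_def)

lemma expl_step_nonempty:
  "A \<union> U \<noteq> {} \<Longrightarrow> expl_step g (A, U, E) =
     ((A - {expl_vertex (A, U, E)}) \<union> expl_new g (A, U, E),
      U - (expl_new g (A, U, E) \<union> {expl_vertex (A, U, E)}),
      E \<union> {expl_vertex (A, U, E)})"
  unfolding expl_step_unfold by (rule if_not_P) simp

lemma expl_vertex_in: "finite (A \<union> U) \<Longrightarrow> A \<union> U \<noteq> {} \<Longrightarrow> expl_vertex (A, U, E) \<in> A \<union> U"
  by (auto simp: expl_vertex_def)

lemma expl_new_subset: "expl_new g (A, U, E) \<subseteq> U - {expl_vertex (A, U, E)}"
  by (auto simp: expl_new_def)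

lemma expl_step_remaining:
  assumes "finite (A \<union> U)" "A \<union> U \<noteq> {}" "expl_step g (A, U, E) = (A', U', E')"
  shows "A' \<union> U' = (A \<union> U) - {expl_vertex (A, U, E)}"
  using expl_new_subset[of g A U E] assms by (auto simp: expl_step_nonempty)

lemma discovered_empty: "discovered g ({}, {}, E) k = 0"
  by (induction k) (auto simp: expl_new_def expl_step_unfold)

lemma expl_step_cong:
  assumes "\<And>x. x \<in> U - {expl_vertex (A, U, E)} \<Longrightarrow>
    g {expl_vertex (A, U, E), x} = h {expl_vertex (A, U, E), x}"
  shows "expl_new g (A, U, E) = expl_new h (A, U, E)"
    and "expl_step g (A, U, E) = expl_step h (A, U, E)"
proof -
  show new: "expl_new g (A, U, E) = expl_new h (A, U, E)"
    using assms by (auto simp: expl_new_def adj_def)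
  show "expl_step g (A, U, E) = expl_step h (A, U, E)"
    using new by (simp add: expl_step_unfold)
qed

lemma discovered_cong:
  assumes "finite (A \<union> U)" "\<And>e. e \<in> pairs (A \<union> U) \<Longrightarrow> g e = h e"
  shows "discovered g (A, U, E) k = discovered h (A, U, E) k"
  using assms
proof (induction k arbitrary: A U E)
  case 0
  then show ?case by simp
next
  case (Suc k)
  show ?case
  proof (cases "A \<union> U = {}")
    case True
    then have "A = {}" "U = {}" by auto
    then show ?thesis by (simp only: discovered_empty)
  next
    case False
    define u where "u = expl_vertex (A, U, E)"
    have u: "u \<in> A \<union> U" using expl_vertex_in[OF Suc.prems(1) False] u_def by simp
    have "\<And>x. x \<in> U - {u} \<Longrightarrow> g {u, x} = h {u, x}"
      using u by (intro Suc.prems(2)) (auto simp: pairs_def)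
    then have same: "expl_new g (A, U, E) = expl_new h (A, U, E)"
        "expl_step g (A, U, E) = expl_step h (A, U, E)"
      using expl_step_cong[of U A E g h] u_def by auto
    obtain A' U' E' where s': "expl_step g (A, U, E) = (A', U', E')" by (metis prod_cases3)
    have "A' \<union> U' = (A \<union> U) - {u}" using expl_step_remaining[OF Suc.prems(1) False s'] u_def by simp
    then have "discovered g (A', U', E') k = discovered h (A', U', E') k"
      using Suc.prems pairs_mono[of "A' \<union> U'" "A \<union> U"] by (intro Suc.IH) auto
    then show ?thesis using same s' by simp
  qed
qed

lemma expl_state_Suc: "expl_state n g (Suc t) = expl_step g (expl_state n g t)"
  by (simp add: expl_state_def)

lemma discovered_Suc_right:
  "discovered g s (Suc m) = discovered g s m + card (expl_new g ((expl_step g ^^ m) s))"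
  by (induction m arbitrary: s) (simp_all add: funpow_swap1)

lemma expl_state_invariant:
  assumes "1 \<le> n" "t \<le> n" "expl_state n g t = (A, U, E)"
  shows "finite (A \<union> U) \<and> A \<inter> U = {} \<and> card (A \<union> U) = n - t"
  using assms(2,3)
proof (induction t arbitrary: A U E)
  case 0
  have "{1::nat} \<union> {2..n} = {1..n}" using assms(1) by auto
  then show ?case using 0 by (auto simp: expl_state_def expl_init_def)
next
  case (Suc t)
  obtain A0 U0 E0 where s: "expl_state n g t = (A0, U0, E0)" by (metis prod_cases3)
  then have I: "finite (A0 \<union> U0)" "A0 \<inter> U0 = {}" "card (A0 \<union> U0) = n - t"
    using Suc by auto
  have ne: "A0 \<union> U0 \<noteq> {}" using I Suc.prems by auto
  have s': "expl_step g (A0, U0, E0) = (A, U, E)" using Suc.prems s by (simp add: expl_state_Suc)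
  have un: "A \<union> U = (A0 \<union> U0) - {expl_vertex (A0, U0, E0)}"
    by (rule expl_step_remaining[OF I(1) ne s'])
  have "A \<inter> U = {}"
    using s' I(2) expl_new_subset[of g A0 U0 E0] by (auto simp: expl_step_nonempty[OF ne])
  then show ?case using un I expl_vertex_in[OF I(1) ne] by simp
qed

lemma steps_active_balance:
  assumes "1 \<le> n" "m \<le> n"
  shows "m + Yproc n g m = 1 + discovered g (expl_init n) m + card {t \<in> {1..<m}. Yproc n g t = 0}"
  using assms(2)
proof (induction m)
  case 0
  then show ?case by (simp add: Yproc_def expl_state_def expl_init_def)
next
  case (Suc m)
  obtain A U E where s: "expl_state n g m = (A, U, E)" by (metis prod_cases3)
  have "m \<le> n" using Suc.prems by simp
  then have I: "finite (A \<union> U)" "A \<inter> U = {}" "card (A \<union> U) = n - m"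
    using expl_state_invariant[OF assms(1) _ s] by blast+
  have ne: "A \<union> U \<noteq> {}" using I Suc.prems by auto
  define u where "u = expl_vertex (A, U, E)"
  define D where "D = expl_new g (A, U, E)"
  have DU: "D \<subseteq> U - {u}" using expl_new_subset u_def D_def by simp
  then have finD: "finite D" using I(1) by (meson Diff_subset finite_Un finite_subset)
  have Y: "Yproc n g (Suc m) = card ((A - {u}) \<union> D)"
    using s by (simp add: Yproc_def expl_state_Suc expl_step_nonempty[OF ne] u_def D_def)
  have N: "discovered g (expl_init n) (Suc m) = discovered g (expl_init n) m + card D"
    using s by (simp add: discovered_Suc_right D_def expl_state_def del: discovered.simps(2))
  have IH: "m + card A = 1 + discovered g (expl_init n) m + card {t \<in> {1..<m}. Yproc n g t = 0}"
    using Suc s by (simp add: Yproc_def)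
  show ?case
  proof (cases "A = {}")
    case False
    have "u \<in> A" using False I(1) by (simp add: u_def expl_vertex_def)
    then have "Suc (card (A - {u})) = card A" using I(1) by (intro card_Suc_Diff1) auto
    moreover have "card ((A - {u}) \<union> D) = card (A - {u}) + card D"
      using DU I finD by (intro card_Un_disjoint) auto
    moreover have "{t \<in> {1..<Suc m}. Yproc n g t = 0} = {t \<in> {1..<m}. Yproc n g t = 0}"
      using False I(1) s by (auto simp: Yproc_def less_Suc_eq)
    ultimately show ?thesis using IH Y N by simp
  next
    case True
    have "m \<noteq> 0" using s True by (cases m) (auto simp: expl_state_def expl_init_def)
    then have "{t \<in> {1..<Suc m}. Yproc n g t = 0} = insert m {t \<in> {1..<m}. Yproc n g t = 0}"
      using True s by (auto simp: Yproc_def less_Suc_eq)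
    then show ?thesis using IH Y N True by simp
  qed
qed

lemma exc_end_le_if_zeros:
  assumes "m \<le> n"
  shows "i \<le> card {t \<in> {1..m}. Yproc n g t = 0} \<Longrightarrow>
    \<exists>k \<le> m. exc_end n g i = enat k \<and> card {t \<in> {1..k}. Yproc n g t = 0} = i"
proof (induction i)
  case 0
  show ?case by (simp add: zero_enat_def)
next
  case (Suc i)
  then obtain k where k: "k \<le> m" "exc_end n g i = enat k" "card {t \<in> {1..k}. Yproc n g t = 0} = i"
    by (auto dest: Suc_leD)
  define P where "P t \<longleftrightarrow> k + 1 \<le> t \<and> t \<le> n \<and> Yproc n g t = 0" for t
  have "\<not> {t \<in> {1..m}. Yproc n g t = 0} \<subseteq> {t \<in> {1..k}. Yproc n g t = 0}"
  proof
    assume "{t \<in> {1..m}. Yproc n g t = 0} \<subseteq> {t \<in> {1..k}. Yproc n g t = 0}"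
    then have "card {t \<in> {1..m}. Yproc n g t = 0} \<le> card {t \<in> {1..k}. Yproc n g t = 0}"
      by (intro card_mono) auto
    then show False using Suc.prems k(3) by simp
  qed
  then obtain t where "t \<in> {1..m}" "Yproc n g t = 0" "t \<notin> {1..k}" by blast
  then have t: "P t" "t \<le> m" using assms by (auto simp: P_def)
  define t0 where "t0 = (LEAST t. P t)"
  have Pt0: "P t0" and t0m: "t0 \<le> m"
    using LeastI[of P t] Least_le[of P t] t unfolding t0_def by auto
  have gap: "Yproc n g t \<noteq> 0" if "k + 1 \<le> t" "t < t0" for t
    using not_less_Least[of t P] that t0m assms unfolding t0_def[symmetric] by (simp add: P_def)
  have "\<exists>t. P t" using t by blast
  then have "exc_end n g (Suc i) = enat t0"
    using k(2) by (simp add: t0_def P_def)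
  moreover have "{t \<in> {1..t0}. Yproc n g t = 0} = insert t0 {t \<in> {1..k}. Yproc n g t = 0}"
  proof (intro set_eqI iffI)
    fix t assume "t \<in> {t \<in> {1..t0}. Yproc n g t = 0}"
    then show "t \<in> insert t0 {t \<in> {1..k}. Yproc n g t = 0}"
      using gap[of t] by (cases "t \<le> k"; cases "t < t0") auto
  qed (use Pt0 in \<open>auto simp: P_def\<close>)
  moreover have "t0 \<notin> {t \<in> {1..k}. Yproc n g t = 0}" using Pt0 by (auto simp: P_def)
  ultimately show ?case using k(3) t0m by auto
qed

lemma good_event_if_few_discovered:
  assumes "1 \<le> n" "m \<le> n" "1 \<le> Lpar n a"
    and "real m \<le> B * real (Lpar n a) * sqrt (real (Tpar n a))"
    and "discovered g (expl_init n) m + 2 * Lpar n a \<le> m"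
  shows "g \<in> good_event n a B"
proof -
  have "card {t \<in> {1..<m}. Yproc n g t = 0} \<le> card {t \<in> {1..m}. Yproc n g t = 0}"
    by (intro card_mono) auto
  then have "2 * Lpar n a - 1 \<le> card {t \<in> {1..m}. Yproc n g t = 0}"
    using steps_active_balance[OF assms(1,2), of g] assms(3,5) by linarith
  then obtain k where "k \<le> m" "exc_end n g (2 * Lpar n a - 1) = enat k"
    using exc_end_le_if_zeros[OF assms(2)] by blast
  then show ?thesis using assms(4) unfolding good_event_def by auto
qed

lemma prob_compl_good_event_le:
  assumes "1 \<le> n" "m \<le> n" "1 \<le> Lpar n a" "real m \<le> B * real (Lpar n a) * sqrt (real (Tpar n a))"
  shows "measure_pmf.prob Q (- good_event n a B)
    \<le> measure_pmf.prob Q {g. real m - 2 * real (Lpar n a) \<le> real (discovered g (expl_init n) m)}"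
proof (rule measure_pmf.finite_measure_mono)
  show "- good_event n a B \<subseteq> {g. real m - 2 * real (Lpar n a) \<le> real (discovered g (expl_init n) m)}"
    using good_event_if_few_discovered[OF assms] by force
qed simp

section \<open>The moment generating function of the discoveries\<close>

text \<open>
  A bound for the number of vertex pairs examined in \<open>k\<close> steps that start with \<open>c\<close> vertices
  not yet explored (active or unseen).
\<close>

fun max_queries :: "nat \<Rightarrow> nat \<Rightarrow> nat" where
  "max_queries c 0 = 0"
| "max_queries c (Suc k) = (c - 1) + max_queries (c - 1) k"

lemma max_queries_le: "k \<le> c \<Longrightarrow> real (max_queries c k) \<le> real k * real c - real k ^ 2 / 2"
proof (induction k arbitrary: c)
  case 0
  then show ?case by simp
next
  case (Suc k)
  then have "real (max_queries c (Suc k)) \<le> (real c - 1) + real k * (real c - 1) - real k ^ 2 / 2"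
    using Suc.IH[of "c - 1"] by (simp add: of_nat_diff)
  also have "\<dots> \<le> real (Suc k) * real c - real (Suc k) ^ 2 / 2"
    by (simp add: power2_eq_square algebra_simps)
  finally show ?case .
qed

lemma bernoulli_pmf_mgf:
  fixes p \<theta> :: real
  assumes "0 \<le> p" "p \<le> 1"
  shows "(\<integral>\<^sup>+b. ennreal (exp (\<theta> * of_bool b)) \<partial>measure_pmf (bernoulli_pmf p))
    = ennreal (1 - p + p * exp \<theta>)"
proof -
  have "(\<integral>\<^sup>+b. ennreal (exp (\<theta> * of_bool b)) \<partial>measure_pmf (bernoulli_pmf p))
      = (\<Sum>b\<in>UNIV. ennreal (exp (\<theta> * of_bool b)) * pmf (bernoulli_pmf p) b)"
    by (rule nn_integral_measure_pmf_support) auto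
  also have "\<dots> = ennreal (exp \<theta>) * ennreal p + ennreal 1 * ennreal (1 - p)"
    using assms by (simp add: UNIV_bool)
  also have "\<dots> = ennreal (1 - p + p * exp \<theta>)"
    using assms by (simp add: ennreal_mult'[symmetric] ennreal_plus[symmetric] mult.commute
        add.commute del: ennreal_plus)
  finally show ?thesis .
qed

lemma star_edges_mgf:
  fixes p \<theta> :: real
  assumes P: "finite P" and W: "finite W" "u \<notin> W" and star: "(\<lambda>x. {u, x}) ` W \<subseteq> P"
    and p: "0 \<le> p" "p \<le> 1"
  shows "(\<integral>\<^sup>+f. ennreal (exp (\<theta> * real (card {x \<in> W. f {u, x}}))) 
      \<partial>measure_pmf (Pi_pmf P False (\<lambda>_. bernoulli_pmf p)))
     = ennreal ((1 - p + p * exp \<theta>) ^ card W)"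
proof -
  define S where "S = (\<lambda>x. {u, x}) ` W"
  have inj: "inj_on (\<lambda>x. {u, x}) W" using W by (auto simp: inj_on_def doubleton_eq_iff)
  define h where "h e b = (if e \<in> S then ennreal (exp (\<theta> * of_bool b)) else 1)" for e b
  have factor: "ennreal (exp (\<theta> * real (card {x \<in> W. f {u, x}}))) = (\<Prod>e\<in>P. h e (f e))" for f
  proof -
    have "(\<Prod>e\<in>P. h e (f e)) = (\<Prod>e\<in>S. ennreal (exp (\<theta> * of_bool (f e))))"
      using star P unfolding S_def h_def by (intro prod.mono_neutral_cong_right) auto
    also have "\<dots> = ennreal (\<Prod>x\<in>W. exp (\<theta> * of_bool (f {u, x})))"
      unfolding S_def by (simp add: prod.reindex[OF inj] prod_ennreal)
    also have "(\<Prod>x\<in>W. exp (\<theta> * of_bool (f {u, x}))) = exp (\<theta> * card (W \<inter> {x. f {u, x}}))"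
      using W by (simp add: exp_sum[symmetric] sum_distrib_left[symmetric])
    finally show ?thesis by (simp add: Int_def conj_commute)
  qed
  have "(\<integral>\<^sup>+f. ennreal (exp (\<theta> * real (card {x \<in> W. f {u, x}}))) 
      \<partial>measure_pmf (Pi_pmf P False (\<lambda>_. bernoulli_pmf p)))
      = (\<Prod>e\<in>P. \<integral>\<^sup>+b. h e b \<partial>measure_pmf (bernoulli_pmf p))"
    unfolding factor by (rule nn_integral_prod_Pi_pmf[OF P])
  also have "\<dots> = (\<Prod>e\<in>P. if e \<in> S then ennreal (1 - p + p * exp \<theta>) else 1)"
    by (intro prod.cong refl) (simp add: h_def bernoulli_pmf_mgf[OF p] measure_pmf.emeasure_space_1)
  also have "\<dots> = (\<Prod>e\<in>S. ennreal (1 - p + p * exp \<theta>))"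
    using star P unfolding S_def by (intro prod.mono_neutral_cong_left[symmetric]) auto
  also have "\<dots> = ennreal (1 - p + p * exp \<theta>) ^ card W"
    using card_image[OF inj] by (simp add: S_def)
  also have "\<dots> = ennreal ((1 - p + p * exp \<theta>) ^ card W)"
    using p by (intro ennreal_power) simp
  finally show ?thesis .
qed

text \<open>
  Splitting the edges inside \<open>A \<union> U\<close> into those at the explored vertex \<open>u\<close> and the rest:
  the first step only reads the former, the remaining steps only the latter.
\<close>

lemma discovered_Suc_split:
  fixes A U E :: "nat set" and f h :: "nat set \<Rightarrow> bool"
  assumes fin: "finite (A \<union> U)" and ne: "A \<union> U \<noteq> {}"
  defines "u \<equiv> expl_vertex (A, U, E)"
  defines "g \<equiv> (\<lambda>e. if e \<in> {e \<in> pairs (A \<union> U). u \<in> e} then f e else h e)"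
  shows "discovered g (A, U, E) (Suc k)
    = card {x \<in> U - {u}. f {u, x}} + discovered h (expl_step f (A, U, E)) k"
proof -
  have u: "u \<in> A \<union> U" using expl_vertex_in[OF fin ne] u_def by simp
  have "\<And>x. x \<in> U - {u} \<Longrightarrow> g {u, x} = f {u, x}"
    using u by (auto simp: g_def pairs_def)
  then have same: "expl_new g (A, U, E) = expl_new f (A, U, E)"
      "expl_step g (A, U, E) = expl_step f (A, U, E)"
    using expl_step_cong[of U A E g f] u_def by auto
  have new: "expl_new f (A, U, E) = {x \<in> U - {u}. f {u, x}}"
    using ne by (auto simp: expl_new_def u_def adj_def)
  obtain A' U' E' where s': "expl_step f (A, U, E) = (A', U', E')" by (metis prod_cases3)
  have "A' \<union> U' = (A \<union> U) - {u}" using expl_step_remaining[OF fin ne s'] u_def by simp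
  then have "discovered g (A', U', E') k = discovered h (A', U', E') k"
    using fin by (intro discovered_cong) (auto simp: g_def pairs_def)
  then show ?thesis using same new s' u_def by simp
qed

lemma pairs_split:
  assumes "u \<in> V"
  shows "pairs V = {e \<in> pairs V. u \<in> e} \<union> pairs (V - {u})"
    and "{e \<in> pairs V. u \<in> e} \<inter> pairs (V - {u}) = {}"
  using assms pairs_mono[of "V - {u}" V] by (auto simp: pairs_def)

lemma nn_integral_discovered_Suc:
  fixes p \<theta> :: real and A U E :: "nat set"
  assumes fin: "finite (A \<union> U)" and ne: "A \<union> U \<noteq> {}"
  defines "u \<equiv> expl_vertex (A, U, E)" and "Q \<equiv> \<lambda>X. Pi_pmf X False (\<lambda>_. bernoulli_pmf p)"
  shows "(\<integral>\<^sup>+g. ennreal (exp (\<theta> * real (discovered g (A, U, E) (Suc k))))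
        \<partial>measure_pmf (Q (pairs (A \<union> U))))
    = (\<integral>\<^sup>+f. ennreal (exp (\<theta> * real (card {x \<in> U - {u}. f {u, x}}))) *
          (\<integral>\<^sup>+h. ennreal (exp (\<theta> * real (discovered h (expl_step f (A, U, E)) k)))
             \<partial>measure_pmf (Q (pairs (A \<union> U - {u}))))
        \<partial>measure_pmf (Q {e \<in> pairs (A \<union> U). u \<in> e}))"
proof -
  define P1 where "P1 = {e \<in> pairs (A \<union> U). u \<in> e}"
  have u: "u \<in> A \<union> U" using expl_vertex_in[OF fin ne] u_def by simp
  note split = pairs_split[OF u, folded P1_def]
  have "finite P1" "finite (pairs (A \<union> U - {u}))"
    using finite_pairs[OF fin] split(1) by (metis finite_Un)+
  then have "Q (pairs (A \<union> U)) =
      map_pmf (\<lambda>(f, h) e. if e \<in> P1 then f e else h e) (pair_pmf (Q P1) (Q (pairs (A \<union> U - {u}))))"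
    unfolding Q_def by (subst split(1)) (rule Pi_pmf_union[OF _ _ split(2)])
  then have "(\<integral>\<^sup>+g. ennreal (exp (\<theta> * real (discovered g (A, U, E) (Suc k))))
        \<partial>measure_pmf (Q (pairs (A \<union> U))))
      = (\<integral>\<^sup>+f. \<integral>\<^sup>+h. ennreal (exp (\<theta> *
            real (discovered (\<lambda>e. if e \<in> P1 then f e else h e) (A, U, E) (Suc k))))
           \<partial>measure_pmf (Q (pairs (A \<union> U - {u}))) \<partial>measure_pmf (Q P1))"
    by (simp add: nn_integral_pair_pmf')
  also have "\<dots> = (\<integral>\<^sup>+f. ennreal (exp (\<theta> * real (card {x \<in> U - {u}. f {u, x}}))) *
          (\<integral>\<^sup>+h. ennreal (exp (\<theta> * real (discovered h (expl_step f (A, U, E)) k)))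
             \<partial>measure_pmf (Q (pairs (A \<union> U - {u})))) \<partial>measure_pmf (Q P1))"
    using discovered_Suc_split[OF fin ne]
    by (intro nn_integral_cong) (simp add: P1_def u_def distrib_left exp_add ennreal_mult'
        nn_integral_cmult[symmetric])
  finally show ?thesis by (simp only: P1_def)
qed

lemma discovered_mgf_le:
  fixes p \<theta> :: real
  assumes "finite (A \<union> U)" "0 \<le> \<theta>" and p: "0 \<le> p" "p \<le> 1"
  defines "M \<equiv> 1 - p + p * exp \<theta>"
  shows "(\<integral>\<^sup>+g. ennreal (exp (\<theta> * real (discovered g (A, U, E) k)))
           \<partial>measure_pmf (Pi_pmf (pairs (A \<union> U)) False (\<lambda>_. bernoulli_pmf p)))
         \<le> ennreal (M ^ max_queries (card (A \<union> U)) k)"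
  using assms(1)
proof (induction k arbitrary: A U E)
  case 0
  then show ?case by (simp add: measure_pmf.emeasure_space_1)
next
  case (Suc k)
  have M1: "1 \<le> M" using assms(2) p mult_left_mono[of 1 "exp \<theta>" p] by (simp add: M_def)
  show ?case
  proof (cases "A \<union> U = {}")
    case True
    then have "discovered g (A, U, E) (Suc k) = 0" for g by (metis Un_empty discovered_empty)
    then show ?thesis using M1 by (simp add: measure_pmf.emeasure_space_1 one_le_power)
  next
    case False
    define u where "u = expl_vertex (A, U, E)"
    define Q where "Q X = Pi_pmf X False (\<lambda>_. bernoulli_pmf p)" for X :: "nat set set"
    define R where "R = M ^ max_queries (card (A \<union> U) - 1) k"
    have u: "u \<in> A \<union> U" using expl_vertex_in[OF Suc.prems False] u_def by simp
    have "card (U - {u}) \<le> card (A \<union> U - {u})" using Suc.prems by (intro card_mono) auto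
    then have W: "card (U - {u}) \<le> card (A \<union> U) - 1" using u Suc.prems by simp
    have IH: "(\<integral>\<^sup>+h. ennreal (exp (\<theta> * real (discovered h (expl_step f (A, U, E)) k)))
        \<partial>measure_pmf (Q (pairs (A \<union> U - {u})))) \<le> ennreal R" for f
    proof -
      obtain A' U' E' where s': "expl_step f (A, U, E) = (A', U', E')" by (metis prod_cases3)
      have "A' \<union> U' = A \<union> U - {u}" using expl_step_remaining[OF Suc.prems False s'] u_def by simp
      then show ?thesis using Suc.IH[of A' U' E'] s' u Suc.prems by (simp add: Q_def R_def)
    qed
    have "(\<integral>\<^sup>+g. ennreal (exp (\<theta> * real (discovered g (A, U, E) (Suc k))))
          \<partial>measure_pmf (Q (pairs (A \<union> U))))
        \<le> (\<integral>\<^sup>+f. ennreal (exp (\<theta> * real (card {x \<in> U - {u}. f {u, x}}))) * ennreal R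
             \<partial>measure_pmf (Q {e \<in> pairs (A \<union> U). u \<in> e}))"
      unfolding nn_integral_discovered_Suc[OF Suc.prems False, where p = p and \<theta> = \<theta> and k = k,
          folded Q_def]
      using IH by (auto simp: u_def intro!: nn_integral_mono mult_left_mono)
    also have "\<dots> = (\<integral>\<^sup>+f. ennreal (exp (\<theta> * real (card {x \<in> U - {u}. f {u, x}})))
        \<partial>measure_pmf (Q {e \<in> pairs (A \<union> U). u \<in> e})) * ennreal R"
      by (rule nn_integral_multc) simp
    also have "(\<integral>\<^sup>+f. ennreal (exp (\<theta> * real (card {x \<in> U - {u}. f {u, x}})))
        \<partial>measure_pmf (Q {e \<in> pairs (A \<union> U). u \<in> e})) = ennreal (M ^ card (U - {u}))"
      unfolding Q_def M_def using finite_pairs[OF Suc.prems] Suc.prems u p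
      by (intro star_edges_mgf) (auto simp: pairs_def)
    also have "ennreal (M ^ card (U - {u})) * ennreal R
        \<le> ennreal (M ^ max_queries (card (A \<union> U)) (Suc k))"
      using M1 W unfolding R_def
      by (simp add: ennreal_mult'[symmetric] power_add[symmetric] power_increasing)
    finally show ?thesis by (simp add: Q_def)
  qed
qed

lemma gnp_discovered_mgf_le:
  fixes p \<theta> :: real
  assumes "1 \<le> n" "0 \<le> \<theta>" "0 \<le> p" "p \<le> 1"
  shows "(\<integral>\<^sup>+g. ennreal (exp (\<theta> * real (discovered g (expl_init n) m))) \<partial>measure_pmf (gnp n p))
      \<le> ennreal ((1 - p + p * exp \<theta>) ^ max_queries n m)"
proof -
  have V: "{1::nat} \<union> {2..n} = {1..n}" using assms(1) by auto
  show ?thesis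
    using discovered_mgf_le[of "{1}" "{2..n}" \<theta> p "{}" m] assms
    unfolding gnp_def vpairs_eq_pairs expl_init_def V by simp
qed

text \<open>
  Here \<open>d\<close> is the deviation from the binomial mean \<open>p S\<close> and \<open>v\<close> an upper bound for that
  mean; the exponent comes from the choice \<open>\<theta> = d / (2 v)\<close>.
\<close>

lemma binomial_mgf_Chernoff:
  fixes Q :: "'a pmf" and X :: "'a \<Rightarrow> real" and p d v b :: real and S :: nat
  assumes mgf: "\<And>\<theta>. 0 \<le> \<theta> \<Longrightarrow>
      (\<integral>\<^sup>+x. ennreal (exp (\<theta> * X x)) \<partial>measure_pmf Q) \<le> ennreal ((1 - p + p * exp \<theta>) ^ S)"
    and "0 \<le> p" "0 < d" "d \<le> 2 * v" "p * S \<le> v" "d \<le> b - p * S"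
  shows "measure_pmf.prob Q {x. b \<le> X x} \<le> exp (- (d^2) / (4 * v))"
proof -
  define \<theta> where "\<theta> = d / (2 * v)"
  have v: "0 < v" using assms by linarith
  have \<theta>: "0 < \<theta>" "\<theta> \<le> 1" using assms v by (auto simp: \<theta>_def field_simps)
  define y where "y = p * (exp \<theta> - 1)"
  have y: "0 \<le> y" using \<theta> assms(2) by (simp add: y_def)
  have "emeasure Q {x. b \<le> X x} \<le> ennreal (exp (- \<theta> * b)) * (\<integral>\<^sup>+x. ennreal (exp (\<theta> * X x)) \<partial>Q)"
    using Chernoff_ineq_nn_integral_ge[of \<theta> UNIV "measure_pmf Q" X b] \<theta> by simp
  also have "\<dots> \<le> ennreal (exp (- \<theta> * b)) * ennreal ((1 + y) ^ S)"
    using mgf[of \<theta>] \<theta> by (intro mult_left_mono) (simp_all add: y_def algebra_simps)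
  finally have "measure_pmf.prob Q {x. b \<le> X x} \<le> exp (- \<theta> * b) * (1 + y) ^ S"
    using y by (simp add: measure_pmf.emeasure_eq_measure ennreal_mult'[symmetric])
  also have "(1 + y) ^ S \<le> exp (S * y)"
    unfolding exp_of_nat_mult using y by (intro power_mono) auto
  also have "exp (- \<theta> * b) * exp (S * y) \<le> exp (- (d^2) / (4 * v))"
  proof -
    have "exp \<theta> - 1 \<le> \<theta> + \<theta>^2" using exp_bound[of \<theta>] \<theta> by simp
    then have "y \<le> p * (\<theta> + \<theta>^2)"
      using assms(2) by (simp add: y_def mult_left_mono)
    then have "S * y \<le> S * (p * (\<theta> + \<theta>^2))"
      by (intro mult_left_mono) auto
    moreover have "- \<theta> * b + S * (p * (\<theta> + \<theta>^2)) = - \<theta> * (b - p * S) + \<theta>^2 * (p * S)"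
      by (simp add: algebra_simps power2_eq_square)
    moreover have "\<theta> * d \<le> \<theta> * (b - p * S)" using assms(6) \<theta> by (intro mult_left_mono) auto
    moreover have "\<theta>^2 * (p * S) \<le> \<theta>^2 * v" using assms(5) by (intro mult_left_mono) auto
    ultimately have "- \<theta> * b + S * y \<le> - \<theta> * d + \<theta>^2 * v" by linarith
    also have "- \<theta> * d + \<theta>^2 * v = - (d^2) / (4 * v)"
      using v by (simp add: \<theta>_def field_simps power2_eq_square)
    finally show ?thesis by (simp add: exp_add[symmetric])
  qed
  finally show ?thesis by simp
qed

lemma gnp_discovered_tail_le:
  fixes p d v b :: real
  assumes "1 \<le> n" "0 \<le> p" "p \<le> 1" "0 < d" "d \<le> 2 * v"
    "p * max_queries n m \<le> v" "d \<le> b - p * max_queries n m"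
  shows "measure_pmf.prob (gnp n p) {g. b \<le> real (discovered g (expl_init n) m)}
    \<le> exp (- (d^2) / (4 * v))"
  by (rule binomial_mgf_Chernoff[OF gnp_discovered_mgf_le[OF assms(1) _ assms(2,3)] assms(2,4-7)])

section \<open>Estimates for the parameters\<close>

lemma power_powr:
  fixes x r :: real
  assumes "0 < x"
  shows "(x ^ k) powr r = x powr (real k * r)"
  using assms by (simp add: powr_realpow[symmetric] powr_powr)

lemma cube_root_bounds:
  assumes "4096 \<le> n"
  defines "x \<equiv> real n powr (1/3)"
  shows "real n = x^3" "16 \<le> x" "real n powr (2/3) = x^2" "real n powr (-1/3) = 1 / x"
proof -
  have x0: "0 < x" using assms by (simp add: x_def)
  show nx: "real n = x^3" using assms by (simp add: x_def powr_power)
  show "16 \<le> x"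
  proof (rule ccontr)
    assume "\<not> 16 \<le> x"
    then have "x^3 < 16^3" using x0 by (intro power_strict_mono) auto
    moreover have "(4096::real) \<le> real n" using assms by simp
    ultimately show False using nx by simp
  qed
  show "real n powr (2/3) = x^2" using power_powr[OF x0, of 3 "2/3"] x0 by (simp add: nx)
  have "real n powr (-1/3) = x powr (- 1)" using power_powr[OF x0, of 3 "-1/3"] by (simp add: nx)
  also have "\<dots> = 1 / x" using x0 by (simp add: powr_minus_divide)
  finally show "real n powr (-1/3) = 1 / x" .
qed

lemma Tpar_bounds:
  fixes x a :: real
  assumes "real n = x ^ 3" "0 < x" "1 \<le> a" "a \<le> x^2"
  shows "x^2 / a \<le> Tpar n a" "Tpar n a \<le> 2 * x^2 / a"
proof -
  have "real n powr (2/3) = x^2"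
    using assms(1,2) power_powr[of x 3 "2/3"] by simp
  then have T: "real (Tpar n a) = real_of_int \<lceil>x^2 / a\<rceil>"
    using assms(3) by (simp add: Tpar_def)
  then show "x^2 / a \<le> Tpar n a" by linarith
  have "1 \<le> x^2 / a" using assms(3,4) by simp
  then show "Tpar n a \<le> 2 * x^2 / a" using T by linarith
qed

lemma Lpar_bounds:
  fixes x a :: real
  assumes "real n = x ^ 3" "0 \<le> x"
  shows "x^3 / (2 * Tpar n a) - 1 \<le> Lpar n a" "Lpar n a \<le> x^3 / (2 * Tpar n a)"
proof -
  have "real (Lpar n a) = real_of_int \<lfloor>x^3 / (2 * Tpar n a)\<rfloor>"
    using assms by (simp add: Lpar_def)
  then show "x^3 / (2 * Tpar n a) - 1 \<le> Lpar n a" "Lpar n a \<le> x^3 / (2 * Tpar n a)"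
    by linarith+
qed

lemma L_sqrt_T_lower:
  fixes x y T L :: real
  assumes "0 < x" "1 \<le> y" "16 \<le> x * y" "0 < T" "T \<le> (2 * x / y)^2" "x^3 / (2 * T) - 1 \<le> L"
  shows "x^2 * y / 8 \<le> L * sqrt T"
proof -
  have sT: "sqrt T \<le> 2 * x / y"
    using real_sqrt_le_mono[OF assms(5)] assms(1,2) by simp
  have "x^2 * y / 4 = x^3 / (2 * (2 * x / y))"
    using assms(1,2) by (simp add: field_simps power2_eq_square power3_eq_cube)
  also have "\<dots> \<le> x^3 / (2 * sqrt T)"
    using sT assms(1,2,4) by (intro divide_left_mono mult_left_mono) auto
  also have "\<dots> = x^3 / (2 * T) * sqrt T"
    using assms(4) by (simp add: field_simps flip: real_sqrt_mult)
  finally have "x^2 * y / 4 - sqrt T \<le> (x^3 / (2 * T) - 1) * sqrt T"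
    by (simp add: algebra_simps)
  also have "\<dots> \<le> L * sqrt T"
    using assms(4,6) by (intro mult_right_mono) auto
  finally have "x^2 * y / 4 - sqrt T \<le> L * sqrt T" .
  moreover have "sqrt T \<le> x^2 * y / 8"
  proof -
    have "2 * x / y \<le> 2 * x" using assms(1,2) by (simp add: divide_le_eq)
    moreover have "x * 16 \<le> x * (x * y)" using assms(1,3) by (intro mult_left_mono) auto
    ultimately show ?thesis using sT by (simp add: power2_eq_square algebra_simps)
  qed
  ultimately show ?thesis by linarith
qed

text \<open>
  With \<open>x = n\<^sup>1\<^sup>/\<^sup>3\<close> and \<open>y = A\<^sup>1\<^sup>/\<^sup>2\<close>: the loss \<open>m\<^sup>2/(2n)\<close> of the binomial mean \<open>p S\<close>
  dominates both \<open>2 L\<close> and the drift \<open>\<lambda> m / x\<close>.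
\<close>

lemma discovery_deficit:
  fixes x y B lam m L S :: real
  assumes x: "16 \<le> x" and y: "1 \<le> y" and B: "64 \<le> B" "B * y \<le> 8 * x" and lam: "8 * \<bar>lam\<bar> \<le> y"
    and m: "B * x^2 * y / 16 \<le> m" "m \<le> B * x^2 * y / 8"
    and L: "2 * L \<le> x * y^2" and S: "0 \<le> S" "S \<le> m * x^3 - m^2 / 2"
  defines "p \<equiv> (1 + lam / x) / x^3" and "d \<equiv> B^2 * x * y^2 / 1024" and "v \<equiv> B * x^2 * y / 4"
  shows "p * S \<le> v" "d \<le> m - 2 * L - p * S"
proof -
  have "64 * y \<le> 8 * x" using B y mult_right_mono[of 64 B y] by linarith
  then have "\<bar>lam\<bar> \<le> x" using lam by linarith
  then have q: "0 \<le> 1 + lam / x" "1 + lam / x \<le> 2" "lam / x \<le> \<bar>lam\<bar> / x"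
    using x by (auto simp: abs_le_iff field_simps)
  have "0 \<le> B * x^2 * y / 16" using x y B by simp
  then have m0: "0 \<le> m" using m(1) by linarith
  have Sm: "S / x^3 \<le> m - m^2 / (2 * x^3)" using S x by (simp add: field_simps)
  moreover have "0 \<le> m^2 / (2 * x^3)" using x by simp
  ultimately have Sm': "S / x^3 \<le> m" by linarith
  then have "(1 + lam / x) * (S / x^3) \<le> 2 * m"
    using q S(1) x by (intro mult_mono) auto
  moreover have "p * S = (1 + lam / x) * (S / x^3)" by (simp add: p_def)
  ultimately show "p * S \<le> v" using m(2) unfolding v_def by linarith
  have "p * S = S / x^3 + S / x^3 * (lam / x)" using x by (simp add: p_def field_simps)
  also have "S / x^3 * (lam / x) \<le> S / x^3 * (\<bar>lam\<bar> / x)"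
    using q(3) S(1) x by (intro mult_left_mono) auto
  also have "\<dots> \<le> m * (\<bar>lam\<bar> / x)"
    using Sm' x by (intro mult_right_mono) auto
  finally have pS: "p * S \<le> m - m^2 / (2 * x^3) + \<bar>lam\<bar> * m / x"
    using Sm by (simp add: mult.commute)
  define K where "K = B^2 * x * y^2"
  have "64 * 64 \<le> B^2" using B mult_mono[of 64 B 64 B] by (simp add: power2_eq_square)
  then have "4096 * (x * y^2) \<le> B^2 * (x * y^2)" using x by (intro mult_right_mono) auto
  then have K: "4096 * (x * y^2) \<le> K" by (simp add: K_def mult.assoc)
  have "0 \<le> x * y^2" using x by simp
  have "K / 512 = (B * x^2 * y / 16)^2 / (2 * x^3)"
    using x by (simp add: K_def field_simps power2_eq_square power3_eq_cube)
  also have "\<dots> \<le> m^2 / (2 * x^3)"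
    using m(1) x y B by (intro divide_right_mono power_mono) auto
  finally have loss: "K / 512 \<le> m^2 / (2 * x^3)" .
  have "\<bar>lam\<bar> * m \<le> (y / 8) * (B * x^2 * y / 8)" using lam m(2) m0 by (intro mult_mono) auto
  also have "\<dots> \<le> B * B * x^2 * y^2 / 4096"
    using B x y mult_right_mono[of 64 B "B * x^2 * y^2"] by (simp add: power2_eq_square algebra_simps)
  finally have "\<bar>lam\<bar> * m / x \<le> K / 4096"
    using x by (simp add: K_def field_simps power2_eq_square)
  then show "d \<le> m - 2 * L - p * S"
    using pS loss L K \<open>0 \<le> x * y^2\<close> unfolding d_def K_def[symmetric] by linarith
qed

lemma Chernoff_exponent:
  fixes x y B :: real
  assumes x: "16 \<le> x" and y: "1 \<le> y" and B: "64 \<le> B" "B * y \<le> 8 * x"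
  defines "d \<equiv> B^2 * x * y^2 / 1024" and "v \<equiv> B * x^2 * y / 4"
  shows "0 < d" "d \<le> 2 * v" "d^2 / (4 * v) = B^3 * y^3 / 1048576"
proof -
  show "0 < d" using B x y by (simp add: d_def)
  have "d = B * x * y * (B * y) / 1024" by (simp add: d_def power2_eq_square)
  also have "\<dots> \<le> B * x * y * (8 * x) / 1024"
    using B x y by (intro divide_right_mono mult_left_mono) auto
  also have "\<dots> \<le> 2 * v" using B x y by (simp add: v_def power2_eq_square)
  finally show "d \<le> 2 * v" .
  show "d^2 / (4 * v) = B^3 * y^3 / 1048576"
    using B x y by (simp add: d_def v_def field_simps power2_eq_square power3_eq_cube)
qed

lemma exploration_horizon:
  fixes x y B :: real
  assumes nx: "real n = x ^ 3" and x: "16 \<le> x" and y: "1 \<le> y" and B: "64 \<le> B" "B * y \<le> 8 * x"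
  obtains m where "m \<le> n" "1 \<le> Lpar n (y^2)" "real m \<le> B * Lpar n (y^2) * sqrt (Tpar n (y^2))"
    "B * x^2 * y / 16 \<le> m" "m \<le> B * x^2 * y / 8" "2 * Lpar n (y^2) \<le> x * y^2"
proof -
  define a where "a = y^2"
  define T where "T = Tpar n a"
  define L where "L = Lpar n a"
  have a: "1 \<le> a" using y by (simp add: a_def)
  have x0: "0 < x" using x by simp
  have "64 * y \<le> 8 * x" using B y mult_right_mono[of 64 B y] by linarith
  then have "a \<le> x^2" using y unfolding a_def by (intro power_mono) auto
  note T = Tpar_bounds[OF nx x0 a this, folded T_def]
  note L = Lpar_bounds[OF nx less_imp_le[OF x0], of a, folded T_def L_def]
  have xa: "0 < x^2 / a" using x a by simp
  then have T0: "0 < T" using T(1) x by linarith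
  have "x^3 / (2 * T) \<le> x^3 / (2 * (x^2 / a))"
    using T(1) xa x T0 a by (intro divide_left_mono mult_left_mono) auto
  also have "\<dots> = x * a / 2" using x a by (simp add: field_simps power2_eq_square power3_eq_cube)
  finally have L2: "2 * L \<le> x * a" using L(2) by linarith
  have "x * a / 4 = x^3 / (2 * (2 * x^2 / a))"
    using x a by (simp add: field_simps power2_eq_square power3_eq_cube)
  also have "\<dots> \<le> x^3 / (2 * T)" using T(2) T0 x a by (intro divide_left_mono mult_left_mono) auto
  finally have "x * a / 4 - 1 \<le> L" using L(1) by linarith
  moreover have "x \<le> x * a" using mult_left_mono[of 1 a x] x a by simp
  ultimately have L1: "1 \<le> L" using x by linarith
  have "2 * x^2 / a \<le> 4 * x^2 / a" using a by (intro divide_right_mono) auto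
  also have "4 * x^2 / a = (2 * x / y)^2" by (simp add: a_def power_divide power_mult_distrib)
  finally have "T \<le> (2 * x / y)^2" using T(2) by linarith
  moreover have "16 \<le> x * y" using x y mult_mono[of 16 x 1 y] by simp
  ultimately have LT: "x^2 * y / 8 \<le> L * sqrt T"
    using L_sqrt_T_lower[of x y "real T" "real L"] x0 y T0 L(1) by simp
  define m where "m = nat \<lfloor>B * x^2 * y / 8\<rfloor>"
  have "1 \<le> x^2" using x by (simp add: one_le_power)
  then have "1 \<le> x^2 * y" using y mult_mono[of 1 "x^2" 1 y] by simp
  then have "64 \<le> B * (x^2 * y)" using B mult_mono[of 64 B 1 "x^2 * y"] by simp
  then have m: "B * x^2 * y / 16 \<le> m" "m \<le> B * x^2 * y / 8"
    unfolding m_def by (simp_all add: mult.assoc) linarith+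
  have "x^2 * (B * y) \<le> x^2 * (8 * x)" using B(2) by (intro mult_left_mono) auto
  then have "B * x^2 * y / 8 \<le> x^3" by (simp add: power2_eq_square power3_eq_cube algebra_simps)
  then have "m \<le> n" using m(2) nx by linarith
  moreover have "B * (x^2 * y / 8) \<le> B * (L * sqrt T)" using LT B by (intro mult_left_mono) auto
  then have "real m \<le> B * L * sqrt T" using m(2) by (simp add: algebra_simps)
  ultimately show ?thesis using that L1 L2 m unfolding L_def T_def a_def by simp
qed

section \<open>The tail bound\<close>

lemma prob_compl_good_event_bound:
  fixes a B lam :: real
  assumes B: "64 \<le> B" and a: "1 \<le> a" "64 * lam^2 \<le> a" and n: "4096 \<le> n"
    and small: "B^2 * a \<le> 64 * real n powr (2/3)"
  shows "measure_pmf.prob (gnp n ((1 + lam * real n powr (-1/3)) / real n)) (- good_event n a B)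
      \<le> exp (- (B^3 / 1048576) * a powr (3/2))"
proof -
  define x where "x = real n powr (1/3)"
  define y where "y = sqrt a"
  note root = cube_root_bounds[OF n, folded x_def]
  have y: "1 \<le> y" "y^2 = a" using a by (auto simp: y_def)
  have "(B * y)^2 \<le> (8 * x)^2" using small y(2) root(3) by (simp add: power_mult_distrib)
  from power2_le_imp_le[OF this] have By: "B * y \<le> 8 * x" using root(2) by simp
  have "(8 * \<bar>lam\<bar>)^2 \<le> y^2" using a(2) y(2) by (simp add: power_mult_distrib)
  from power2_le_imp_le[OF this] have lam: "8 * \<bar>lam\<bar> \<le> y" using y by simp
  obtain m where m: "m \<le> n" "1 \<le> Lpar n a" "real m \<le> B * Lpar n a * sqrt (Tpar n a)"
    "B * x^2 * y / 16 \<le> m" "m \<le> B * x^2 * y / 8" "2 * Lpar n a \<le> x * y^2"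
    using exploration_horizon[OF root(1,2) y(1) B By] unfolding y(2) by blast
  define p where "p = (1 + lam / x) / x^3"
  have "64 * \<bar>lam\<bar> \<le> x" using lam By B y(1) mult_right_mono[of 64 B y] by linarith
  then have q: "0 \<le> 1 + lam / x" "1 + lam / x \<le> 2" using root(2) by (auto simp: abs_le_iff field_simps)
  moreover have "2 \<le> x^3" using n by (simp add: root(1)[symmetric])
  ultimately have "1 + lam / x \<le> x^3" by linarith
  then have p: "0 \<le> p" "p \<le> 1" using q(1) root(2) by (simp_all add: p_def)
  have p_eq: "(1 + lam * real n powr (-1/3)) / real n = p" unfolding root(4) by (simp add: p_def root(1))
  have a_powr: "a powr (3/2) = y^3"
    unfolding y(2)[symmetric] using power_powr[of y 2 "3/2"] y(1) by simp
  define d where "d = B^2 * x * y^2 / 1024"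
  define v where "v = B * x^2 * y / 4"
  note exponent = Chernoff_exponent[OF root(2) y(1) B By, folded d_def v_def]
  have "real (max_queries n m) \<le> real m * x^3 - (real m)^2 / 2"
    using max_queries_le[OF m(1)] root(1) by (simp add: mult.commute)
  note deficit = discovery_deficit[OF root(2) y(1) B By lam m(4,5) _ _ this, folded p_def d_def v_def]
  have "measure_pmf.prob (gnp n p) (- good_event n a B)
      \<le> measure_pmf.prob (gnp n p) {g. real m - 2 * real (Lpar n a) \<le> real (discovered g (expl_init n) m)}"
    using n by (intro prob_compl_good_event_le m(1-3)) simp
  also have "\<dots> \<le> exp (- (d^2) / (4 * v))"
    using n p exponent(1,2) deficit m(6) by (intro gnp_discovered_tail_le) simp_all
  also have "- (d^2) / (4 * v) = - (d^2 / (4 * v))" by simp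
  also have "\<dots> = - (B^3 / 1048576) * a powr (3/2)"
    using exponent(3) a_powr by simp
  finally show ?thesis unfolding p_eq .
qed

lemma prob_compl_good_event_eventually:
  fixes B lam :: real and A :: "nat \<Rightarrow> real"
  assumes B: "64 \<le> B" and A: "A \<in> o(\<lambda>n. real n powr (2/3))" "\<forall>n. max 1 (64 * lam^2) \<le> A n"
  shows "\<forall>\<^sub>F n in sequentially.
    measure_pmf.prob (gnp n ((1 + lam * real n powr (-1/3)) / real n)) (- good_event n (A n) B)
      \<le> exp (- (B^3 / 1048576) * A n powr (3/2))"
proof -
  have "\<forall>\<^sub>F n in sequentially. \<bar>A n\<bar> \<le> 64 / B^2 * real n powr (2/3)"
    using landau_o.smallD[OF A(1), of "64 / B^2"] B by simp
  moreover have "\<forall>\<^sub>F n in sequentially. 4096 \<le> n" by (rule eventually_ge_at_top)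
  ultimately show ?thesis
  proof eventually_elim
    case (elim n)
    have a: "1 \<le> A n" "64 * lam^2 \<le> A n" using A(2) by auto
    then have "B^2 * A n \<le> 64 * real n powr (2/3)" using elim(1) B by (simp add: field_simps)
    then show ?case using prob_compl_good_event_bound[OF B a elim(2)] by simp
  qed
qed

theorem proposition1:
  fixes lam :: real
  shows "\<exists>B0 > 0. \<exists>A0 > 0. \<forall>B \<ge> B0. \<exists>c > 0. \<forall>A :: nat \<Rightarrow> real.
     (A \<in> o(\<lambda>n. real n powr (2/3)) \<and> (\<forall>n. A n \<ge> A0)) \<longrightarrow>
     (\<forall>\<^sub>F n in sequentially.
        measure_pmf.prob (gnp n ((1 + lam * real n powr (-1/3)) / real n))
          (- good_event n (A n) B) \<le> exp (- c * A n powr (3/2)))"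
proof -
  have "\<forall>B \<ge> 64. \<exists>c > 0. \<forall>A :: nat \<Rightarrow> real.
     (A \<in> o(\<lambda>n. real n powr (2/3)) \<and> (\<forall>n. A n \<ge> max 1 (64 * lam^2))) \<longrightarrow>
     (\<forall>\<^sub>F n in sequentially.
        measure_pmf.prob (gnp n ((1 + lam * real n powr (-1/3)) / real n))
          (- good_event n (A n) B) \<le> exp (- c * A n powr (3/2)))"
    using prob_compl_good_event_eventually by (intro allI impI exI[of _ "B^3 / 1048576" for B]) auto
  moreover have "0 < (64::real)" "0 < max 1 (64 * lam^2)" by auto
  ultimately show ?thesis by blast
qed

end
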